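(* Let $\mathsf X$ be a metric space and $Q$ a transition kernel on $\mathsf X$. Then: (a) if $Q$ is strongly irreducible, then $Q$ is weakly irreducible; (b) if $Q$ is weakly irreducible, then $Q$ is open set irreducible.
   Context: $\mathscr B$ is the Borel $\sigma$-algebra of $\mathsf X$. A transition kernel on $\mathsf X$ is a map $Q:\mathsf X\times\mathscr B\to[0,1]$ that is Borel measurable in its first argument and a probability measure in its second; $Q^n$ denotes the $n$-step kernel, $Q^n(x,B)=(Q^n\mathbb 1_B)(x)$, where $Q$ also denotes the Markov operator $(Qf)(x)=\int f(x')Q(x,\mathrm dx')$ on $b\mathsf X$, the Banach space of bounded Borel measurable real functions on $\mathsf X$ with the supremum norm and pointwise order. $b\mathsf X_+$ denotes its nonnegative elements, $b\mathsf X'$ its dual, and $b\mathsf X'_+$ the positive functionals. An ideal of $b\mathsf X$ is a linear subspace $I$ with $f\in I$, $|g|\le|f|\Rightarrow g\in I$; it is invariant for $K$ if $KI\subset I$. A positive linear operator on $b\mathsf X$ is irreducible if its only invariant ideals are $\{0\}$ and $b\mathsf X$; equivalently (a standard fact), for every nonzero $f\in b\mathsf X_+$ and nonzero $\mu\in b\mathsf X'_+$ there is $m\in\mathbb N=\{1,2,\dots\}$ with $\mu(K^mf)>0$. $Q$ is strongly irreducible if its Markov operator is irreducible in this sense. $Q$ is weakly irreducible if there is a measure $\pi$ on $(\mathsf X,\mathscr B)$ such that $\pi(G)>0$ for every nonempty open $G$, and $Q$ is $\pi$-irreducible: for every $x\in\mathsf X$ and every $B\in\mathscr B$ with $\pi(B)>0$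 there is $n\in\mathbb N$ with $Q^n(x,B)>0$. A point $y$ is $Q$-reachable from $x$ if for each open neighborhood $G$ of $y$ there is $n\in\mathbb N$ with $Q^n(x,G)>0$; $Q$ is open set irreducible if every $y$ is $Q$-reachable from every $x$. *)

theory Defs
  imports "HOL-Probability.Probability"
begin

definition bX :: "('a::metric_space \<Rightarrow> real) set" where
  "bX = {f. f \<in> borel_measurable borel \<and> bounded (range f)}"

definition transition_kernel :: "('a::metric_space \<Rightarrow> 'a measure) \<Rightarrow> bool" where
  "transition_kernel Q \<longleftrightarrow>
     (\<forall>x. prob_space (Q x) \<and> sets (Q x) = sets borel) \<and>
     (\<forall>B\<in>sets borel. (\<lambda>x. measure (Q x) B) \<in> borel_measurable borel)"

definition markov_op :: "('a::metric_space \<Rightarrow> 'a measure) \<Rightarrow> ('a \<Rightarrow> real) \<Rightarrow> 'a \<Rightarrow> real" where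
  "markov_op Q f = (\<lambda>x. \<integral>y. f y \<partial>(Q x))"

definition kstep :: "('a::metric_space \<Rightarrow> 'a measure) \<Rightarrow> nat \<Rightarrow> 'a \<Rightarrow> 'a set \<Rightarrow> real" where
  "kstep Q n x B = ((markov_op Q ^^ n) (indicator B)) x"

definition bX_ideal :: "('a::metric_space \<Rightarrow> real) set \<Rightarrow> bool" where
  "bX_ideal I \<longleftrightarrow> I \<subseteq> bX \<and> (\<lambda>x. 0) \<in> I \<and>
     (\<forall>f\<in>I. \<forall>g\<in>I. (\<lambda>x. f x + g x) \<in> I) \<and>
     (\<forall>c::real. \<forall>f\<in>I. (\<lambda>x. c * f x) \<in> I) \<and>
     (\<forall>f\<in>I. \<forall>g\<in>bX. (\<forall>x. \<bar>g x\<bar> \<le> \<bar>f x\<bar>) \<longrightarrow> g \<in> I)"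

definition irreducible_op :: "(('a::metric_space \<Rightarrow> real) \<Rightarrow> ('a \<Rightarrow> real)) \<Rightarrow> bool" where
  "irreducible_op K \<longleftrightarrow>
     (\<forall>I. bX_ideal I \<and> (\<forall>f\<in>I. K f \<in> I) \<longrightarrow> I = {\<lambda>x. 0} \<or> I = bX)"

definition strongly_irreducible :: "('a::metric_space \<Rightarrow> 'a measure) \<Rightarrow> bool" where
  "strongly_irreducible Q \<longleftrightarrow> irreducible_op (markov_op Q)"

definition pi_irreducible :: "('a::metric_space \<Rightarrow> 'a measure) \<Rightarrow> 'a measure \<Rightarrow> bool" where
  "pi_irreducible Q \<pi> \<longleftrightarrow>
     (\<forall>x. \<forall>B\<in>sets borel. emeasure \<pi> B > 0 \<longrightarrow> (\<exists>n\<ge>1. kstep Q n x B > 0))"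

definition weakly_irreducible :: "('a::metric_space \<Rightarrow> 'a measure) \<Rightarrow> bool" where
  "weakly_irreducible Q \<longleftrightarrow>
     (\<exists>\<pi>. sets \<pi> = sets borel \<and> (\<forall>G. open G \<and> G \<noteq> {} \<longrightarrow> emeasure \<pi> G > 0) \<and>
          pi_irreducible Q \<pi>)"

definition reachable :: "('a::metric_space \<Rightarrow> 'a measure) \<Rightarrow> 'a \<Rightarrow> 'a \<Rightarrow> bool" where
  "reachable Q x y \<longleftrightarrow> (\<forall>G. open G \<and> y \<in> G \<longrightarrow> (\<exists>n\<ge>1. kstep Q n x G > 0))"

definition open_set_irreducible :: "('a::metric_space \<Rightarrow> 'a measure) \<Rightarrow> bool" where
  "open_set_irreducible Q \<longleftrightarrow> (\<forall>x y. reachable Q x y)"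

end

theory Submission
  imports Defs
begin

(*
  (a) Fix a point x. The bounded Borel functions f with (Q^m |f|)(x) = 0 for all m >= 1
  form an ideal of bX which the Markov operator leaves invariant, since |Q f| <= Q |f|,
  and which does not contain the constant 1. Strong irreducibility therefore forces it
  to be {0}; as the indicator of a nonempty Borel set B is nonzero, Q^m(x, B) > 0 for
  some m >= 1. Hence Q is pi-irreducible for the counting measure on the Borel sets,
  which charges every nonempty open set.

  (b) A nonempty open neighbourhood of y has positive pi-measure, so it is reached
  from every x.
*)

lemma bX_iff: "f \<in> bX \<longleftrightarrow> f \<in> borel_measurable borel \<and> (\<exists>B. \<forall>x. \<bar>f x\<bar> \<le> B)"
  unfolding bX_def bounded_iff by auto

lemma bX_add: "f \<in> bX \<Longrightarrow> g \<in> bX \<Longrightarrow> (\<lambda>x. f x + g x) \<in> bX"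
  unfolding bX_iff
proof (elim conjE exE, intro conjI)
  fix B C assume "\<forall>x. \<bar>f x\<bar> \<le> B" "\<forall>x. \<bar>g x\<bar> \<le> C"
  then show "\<exists>B. \<forall>x. \<bar>f x + g x\<bar> \<le> B"
    by (metis abs_triangle_ineq add_mono order.trans)
qed auto

lemma bX_cmult: "f \<in> bX \<Longrightarrow> (\<lambda>x. c * f x) \<in> bX"
  unfolding bX_iff
proof (elim conjE exE, intro conjI)
  fix B assume "\<forall>x. \<bar>f x\<bar> \<le> B"
  then show "\<exists>B. \<forall>x. \<bar>c * f x\<bar> \<le> B"
    by (intro exI[of _ "\<bar>c\<bar> * B"]) (simp add: abs_mult mult_left_mono)
qed auto

lemma bX_abs: "f \<in> bX \<Longrightarrow> (\<lambda>x. \<bar>f x\<bar>) \<in> bX"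
  unfolding bX_iff by auto

lemma bX_const: "(\<lambda>x. c) \<in> bX"
  unfolding bX_iff by auto

lemma bX_indicator: "B \<in> sets borel \<Longrightarrow> (indicator B :: 'a::metric_space \<Rightarrow> real) \<in> bX"
  unfolding bX_iff by (auto intro!: exI[of _ 1] simp: indicator_def)

lemma transition_kernel_prob_space: "transition_kernel Q \<Longrightarrow> prob_space (Q x)"
  and transition_kernel_sets: "transition_kernel Q \<Longrightarrow> sets (Q x) = sets borel"
  unfolding transition_kernel_def by auto

lemma transition_kernel_measurable_subprob_algebra:
  assumes "transition_kernel Q"
  shows "Q \<in> borel \<rightarrow>\<^sub>M subprob_algebra borel"
proof (rule measurable_subprob_algebra)
  fix x
  show "subprob_space (Q x)"
    using transition_kernel_prob_space[OF assms] by (rule prob_space_imp_subprob_space)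
  show "sets (Q x) = sets borel"
    using assms by (rule transition_kernel_sets)
next
  fix A :: "'a set" assume A: "A \<in> sets borel"
  have "emeasure (Q x) A = ennreal (measure (Q x) A)" for x
    using transition_kernel_prob_space[OF assms]
    by (metis prob_space.finite_measure finite_measure.emeasure_eq_measure)
  moreover have "(\<lambda>x. ennreal (measure (Q x) A)) \<in> borel_measurable borel"
    using assms A unfolding transition_kernel_def by auto
  ultimately show "(\<lambda>x. emeasure (Q x) A) \<in> borel_measurable borel"
    by simp
qed

lemma integrable_transition_kernel:
  assumes "transition_kernel Q" "f \<in> bX"
  shows "integrable (Q x) f"
proof -
  obtain B where B: "\<forall>x. \<bar>f x\<bar> \<le> B" and f: "f \<in> borel_measurable borel"
    using assms(2) unfolding bX_iff by auto
  have "f \<in> borel_measurable (Q x)"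
    using f measurable_cong_sets[OF transition_kernel_sets[OF assms(1)] refl] by blast
  moreover have "finite_measure (Q x)"
    using transition_kernel_prob_space[OF assms(1)] by (rule prob_space.finite_measure)
  ultimately show ?thesis
    using B by (intro finite_measure.integrable_const_bound[where B=B]) auto
qed

lemma markov_op_bX:
  assumes "transition_kernel Q" "f \<in> bX"
  shows "markov_op Q f \<in> bX"
proof -
  obtain B where B: "\<forall>x. \<bar>f x\<bar> \<le> B" and f: "f \<in> borel_measurable borel"
    using assms(2) unfolding bX_iff by auto
  have "markov_op Q f \<in> borel_measurable borel"
    using measurable_comp[OF transition_kernel_measurable_subprob_algebra[OF assms(1)]
        integral_measurable_subprob_algebra[OF f]]
    by (simp add: markov_op_def comp_def)
  moreover have "\<bar>markov_op Q f x\<bar> \<le> B" for x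
  proof -
    interpret prob_space "Q x"
      using assms(1) by (rule transition_kernel_prob_space)
    have "\<bar>markov_op Q f x\<bar> \<le> (\<integral>y. \<bar>f y\<bar> \<partial>Q x)"
      unfolding markov_op_def by (rule integral_abs_bound)
    also have "\<dots> \<le> (\<integral>y. B \<partial>Q x)"
      using B integrable_transition_kernel[OF assms] by (intro integral_mono) auto
    also have "\<dots> = B"
      by (simp add: prob_space)
    finally show ?thesis .
  qed
  ultimately show ?thesis
    unfolding bX_iff by blast
qed

lemma markov_op_mono:
  assumes "transition_kernel Q" "f \<in> bX" "g \<in> bX" "\<And>x. f x \<le> g x"
  shows "markov_op Q f x \<le> markov_op Q g x"
  unfolding markov_op_def
  using integrable_transition_kernel[OF assms(1)] assms(2-4) by (intro integral_mono) auto

lemma markov_op_add: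
  assumes "transition_kernel Q" "f \<in> bX" "g \<in> bX"
  shows "markov_op Q (\<lambda>x. f x + g x) = (\<lambda>x. markov_op Q f x + markov_op Q g x)"
  unfolding markov_op_def
  using integrable_transition_kernel[OF assms(1)] assms(2,3) by (intro ext integral_add) auto

lemma markov_op_cmult: "markov_op Q (\<lambda>x. c * f x) = (\<lambda>x. c * markov_op Q f x)"
  unfolding markov_op_def by simp

lemma markov_op_const:
  assumes "transition_kernel Q"
  shows "markov_op Q (\<lambda>x. c) = (\<lambda>x. c)"
  using prob_space.prob_space[OF transition_kernel_prob_space[OF assms]]
  by (simp add: markov_op_def)

lemma markov_op_abs_le: "\<bar>markov_op Q f x\<bar> \<le> markov_op Q (\<lambda>y. \<bar>f y\<bar>) x"
  unfolding markov_op_def by (rule integral_abs_bound)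

lemma markov_iter_bX:
  assumes "transition_kernel Q" "f \<in> bX"
  shows "(markov_op Q ^^ m) f \<in> bX"
  by (induction m) (auto intro: markov_op_bX[OF assms(1)] assms(2))

lemma markov_iter_mono:
  assumes "transition_kernel Q" "f \<in> bX" "g \<in> bX" "\<And>x. f x \<le> g x"
  shows "(markov_op Q ^^ m) f x \<le> (markov_op Q ^^ m) g x"
proof (induction m arbitrary: x)
  case 0
  then show ?case using assms(4) by simp
next
  case (Suc m)
  then show ?case
    using markov_op_mono[OF assms(1) markov_iter_bX[OF assms(1,2)] markov_iter_bX[OF assms(1,3)]]
    by simp
qed

lemma markov_iter_add:
  assumes "transition_kernel Q" "f \<in> bX" "g \<in> bX"
  shows "(markov_op Q ^^ m) (\<lambda>x. f x + g x) =
    (\<lambda>x. (markov_op Q ^^ m) f x + (markov_op Q ^^ m) g x)"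
proof (induction m)
  case 0
  then show ?case by simp
next
  case (Suc m)
  then show ?case
    using markov_op_add[OF assms(1) markov_iter_bX[OF assms(1,2)] markov_iter_bX[OF assms(1,3)]]
    by simp
qed

lemma markov_iter_cmult: "(markov_op Q ^^ m) (\<lambda>x. c * f x) = (\<lambda>x. c * (markov_op Q ^^ m) f x)"
  by (induction m) (simp_all add: markov_op_cmult)

lemma markov_iter_const:
  assumes "transition_kernel Q"
  shows "(markov_op Q ^^ m) (\<lambda>x. c) = (\<lambda>x. c)"
  by (induction m) (simp_all add: markov_op_const[OF assms])

lemma markov_iter_nonneg:
  assumes "transition_kernel Q" "f \<in> bX" "\<And>x. f x \<ge> 0"
  shows "(markov_op Q ^^ m) f x \<ge> 0"
  using markov_iter_mono[OF assms(1) bX_const assms(2,3)] markov_iter_const[OF assms(1)]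
  by metis

definition null_ideal :: "('a::metric_space \<Rightarrow> 'a measure) \<Rightarrow> 'a \<Rightarrow> ('a \<Rightarrow> real) set" where
  "null_ideal Q x = {f \<in> bX. \<forall>m\<ge>1. (markov_op Q ^^ m) (\<lambda>y. \<bar>f y\<bar>) x = 0}"

lemma null_ideal_solid:
  assumes Q: "transition_kernel Q" and f: "f \<in> null_ideal Q x"
    and g: "g \<in> bX" "\<And>y. \<bar>g y\<bar> \<le> \<bar>f y\<bar>"
  shows "g \<in> null_ideal Q x"
proof -
  have "(markov_op Q ^^ m) (\<lambda>y. \<bar>g y\<bar>) x = 0" if "m \<ge> 1" for m
  proof (rule antisym)
    have "(markov_op Q ^^ m) (\<lambda>y. \<bar>g y\<bar>) x \<le> (markov_op Q ^^ m) (\<lambda>y. \<bar>f y\<bar>) x"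
      using f g by (intro markov_iter_mono[OF Q] bX_abs) (auto simp: null_ideal_def)
    then show "(markov_op Q ^^ m) (\<lambda>y. \<bar>g y\<bar>) x \<le> 0"
      using f that by (simp add: null_ideal_def)
    show "(markov_op Q ^^ m) (\<lambda>y. \<bar>g y\<bar>) x \<ge> 0"
      using g by (intro markov_iter_nonneg[OF Q] bX_abs) auto
  qed
  then show ?thesis
    using g by (simp add: null_ideal_def)
qed

lemma bX_ideal_null_ideal:
  assumes Q: "transition_kernel Q"
  shows "bX_ideal (null_ideal Q x)"
  unfolding bX_ideal_def
proof (intro conjI ballI allI impI)
  show "null_ideal Q x \<subseteq> bX"
    by (auto simp: null_ideal_def)
  show "(\<lambda>y. 0) \<in> null_ideal Q x"
    using markov_iter_const[OF Q, of _ 0] by (simp add: null_ideal_def bX_const)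
next
  fix f g assume f: "f \<in> null_ideal Q x" and g: "g \<in> null_ideal Q x"
  then have fg: "f \<in> bX" "g \<in> bX"
    by (auto simp: null_ideal_def)
  have "(\<lambda>y. \<bar>f y\<bar> + \<bar>g y\<bar>) \<in> null_ideal Q x"
    using f g markov_iter_add[OF Q bX_abs[OF fg(1)] bX_abs[OF fg(2)]]
    by (simp add: null_ideal_def bX_add bX_abs fg)
  then show "(\<lambda>y. f y + g y) \<in> null_ideal Q x"
    by (rule null_ideal_solid[OF Q]) (auto simp: bX_add fg)
next
  fix c :: real and f assume f: "f \<in> null_ideal Q x"
  then have fb: "f \<in> bX"
    by (simp add: null_ideal_def)
  have "(\<lambda>y. \<bar>c\<bar> * \<bar>f y\<bar>) \<in> null_ideal Q x"
    using f markov_iter_cmult[where c="\<bar>c\<bar>" and f="\<lambda>y. \<bar>f y\<bar>"]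
    by (simp add: null_ideal_def bX_cmult bX_abs fb)
  then show "(\<lambda>y. c * f y) \<in> null_ideal Q x"
    by (rule null_ideal_solid[OF Q]) (auto simp: bX_cmult fb abs_mult)
next
  fix f g assume "f \<in> null_ideal Q x" "g \<in> bX" "\<forall>y. \<bar>g y\<bar> \<le> \<bar>f y\<bar>"
  then show "g \<in> null_ideal Q x"
    using null_ideal_solid[OF Q] by blast
qed

lemma markov_op_null_ideal:
  assumes Q: "transition_kernel Q" and f: "f \<in> null_ideal Q x"
  shows "markov_op Q f \<in> null_ideal Q x"
proof -
  have fb: "f \<in> bX"
    using f by (simp add: null_ideal_def)
  have "(markov_op Q ^^ m) (\<lambda>y. \<bar>markov_op Q (\<lambda>z. \<bar>f z\<bar>) y\<bar>) x = 0" if "m \<ge> 1" for m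
  proof -
    have "markov_op Q (\<lambda>z. \<bar>f z\<bar>) y \<ge> 0" for y
      using markov_iter_nonneg[OF Q bX_abs[OF fb], of 1] by simp
    then have "(markov_op Q ^^ m) (\<lambda>y. \<bar>markov_op Q (\<lambda>z. \<bar>f z\<bar>) y\<bar>) x =
        (markov_op Q ^^ Suc m) (\<lambda>z. \<bar>f z\<bar>) x"
      by (simp add: funpow_Suc_right del: funpow.simps)
    also have "\<dots> = 0"
      using f by (auto simp: null_ideal_def simp del: funpow.simps)
    finally show ?thesis .
  qed
  then have "markov_op Q (\<lambda>z. \<bar>f z\<bar>) \<in> null_ideal Q x"
    by (simp add: null_ideal_def markov_op_bX[OF Q] bX_abs fb)
  moreover have "\<bar>markov_op Q f y\<bar> \<le> \<bar>markov_op Q (\<lambda>z. \<bar>f z\<bar>) y\<bar>" for y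
    by (rule order_trans[OF markov_op_abs_le abs_ge_self])
  ultimately show ?thesis
    using null_ideal_solid[OF Q _ markov_op_bX[OF Q fb]] by blast
qed

lemma one_notin_null_ideal:
  assumes "transition_kernel Q"
  shows "(\<lambda>y. 1) \<notin> null_ideal Q x"
  using markov_iter_const[OF assms, of 1 1] by (auto simp: null_ideal_def)

lemma strongly_irreducible_kstep_pos:
  assumes Q: "transition_kernel Q" and S: "strongly_irreducible Q"
    and B: "B \<in> sets borel" "B \<noteq> {}"
  shows "\<exists>n\<ge>1. kstep Q n x B > 0"
proof (rule ccontr)
  assume "\<not> ?thesis"
  then have "(markov_op Q ^^ n) (indicator B) x = 0" if "n \<ge> 1" for n
    using that markov_iter_nonneg[OF Q bX_indicator[OF B(1)], of n x]
    by (auto simp: kstep_def)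
  then have "indicator B \<in> null_ideal Q x"
    by (simp add: null_ideal_def bX_indicator[OF B(1)])
  moreover have "null_ideal Q x = {\<lambda>y. 0} \<or> null_ideal Q x = bX"
    using S bX_ideal_null_ideal[OF Q] markov_op_null_ideal[OF Q]
    unfolding strongly_irreducible_def irreducible_op_def by blast
  moreover have "indicator B \<noteq> (\<lambda>y. 0::real)"
    using B(2) by (auto simp: fun_eq_iff indicator_def)
  ultimately show False
    using one_notin_null_ideal[OF Q] bX_const by auto
qed

lemma weakly_irreducible_if_kstep_pos:
  assumes "\<And>x B. B \<in> sets borel \<Longrightarrow> B \<noteq> {} \<Longrightarrow> \<exists>n\<ge>1. kstep Q n x B > 0"
  shows "weakly_irreducible Q"
proof -
  define \<pi> where "\<pi> = distr (count_space UNIV) borel (\<lambda>x. x :: 'a)"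
  have \<pi>_pos: "emeasure \<pi> B > 0" if "B \<in> sets borel" "B \<noteq> {}" for B
    using that by (simp add: \<pi>_def emeasure_distr emeasure_count_space_eq_0 zero_less_iff_neq_zero)
  have "sets \<pi> = sets borel"
    by (simp add: \<pi>_def)
  moreover have "emeasure \<pi> G > 0" if "open G" "G \<noteq> {}" for G
    using that by (intro \<pi>_pos) auto
  moreover have "pi_irreducible Q \<pi>"
    unfolding pi_irreducible_def
  proof (intro allI ballI impI)
    fix x B assume "B \<in> sets borel" "emeasure \<pi> B > 0"
    then show "\<exists>n\<ge>1. kstep Q n x B > 0"
      by (intro assms) auto
  qed
  ultimately show ?thesis
    unfolding weakly_irreducible_def by blast
qed

lemma weakly_irreducible_imp_open_set_irreducible:
  assumes "weakly_irreducible Q"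
  shows "open_set_irreducible Q"
proof -
  obtain \<pi> where "\<And>G. open G \<Longrightarrow> G \<noteq> {} \<Longrightarrow> emeasure \<pi> G > 0" "pi_irreducible Q \<pi>"
    using assms unfolding weakly_irreducible_def by blast
  then show ?thesis
    unfolding open_set_irreducible_def reachable_def pi_irreducible_def
    by (blast intro: borel_open)
qed

theorem lemma4p3:
  fixes Q :: "'a::metric_space \<Rightarrow> 'a measure"
  assumes "transition_kernel Q"
  shows "(strongly_irreducible Q \<longrightarrow> weakly_irreducible Q) \<and>
         (weakly_irreducible Q \<longrightarrow> open_set_irreducible Q)"
proof (intro conjI impI)
  assume "strongly_irreducible Q"
  then show "weakly_irreducible Q"
    using strongly_irreducible_kstep_pos[OF assms] by (intro weakly_irreducible_if_kstep_pos)
next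
  assume "weakly_irreducible Q"
  then show "open_set_irreducible Q"
    by (rule weakly_irreducible_imp_open_set_irreducible)
qed

end
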